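(* Let $A$ be a connectivity class of external positions of the $n$-dimensional puzzle with edge $k$ which is not its frame class, and let $p_1,p_2,p_3$ be three distinct positions in $A$. Then there exist a combination $g$ and a 3-dimensional layer $L=\{p\in M^n: p_l=c_l\ \text{for } l\notin I\}$ (with $I\subseteq\{1,\dots,n\}$, $|I|=3$, $c_l\in M$) such that $g(p_r)\in L$ for $r=1,2,3$, and the restrictions $g(p_1)|_I,g(p_2)|_I,g(p_3)|_I\in M^3$ all lie in one and the same connectivity class of the 3-dimensional puzzle with edge $k$, this class not being the frame class of the 3-dimensional puzzle.
   Context: Fix integers $k\ge2$, $n\ge3$, $M=\{0,\dots,k-1\}$. For any dimension $d\ge3$ the $d$-dimensional puzzle with edge $k$ has positions $p\in M^d$; $B(p)=\{i:p_i\in\{0,k-1\}\}$, $p$ external if $B(p)\ne\emptyset$. For distinct $i,j$, $\psi_{i,j}:M^d\to M^d$ is $(\psi_{i,j}p)_i=k-1-p_j$, $(\psi_{i,j}p)_j=p_i$, other coordinates unchanged. A move is given by distinct $i,j$ and constants $c_l\in M$ ($l\notin\{i,j\}$) and applies $\psi_{i,j}$ to all positions $p$ with $p_l=c_l$ ($l\notin\{i,j\}$), fixing the others; a combination is a finite sequence of moves (composite permutation of $M^d$). Connectivity classes are orbits of external positions under combinations. For odd $k$ the frame class is the set of positions with exactly one coordinate in $\{0,k-1\}$ and all others equal to $(k-1)/2$; for even $k$ there is none. For $I=\{i_1<i_2<i_3\}$, $p|_I=(p_{i_1},p_{i_2},p_{i_3})\in M^3$. *)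

theory Defs
  imports Main
begin

text \<open>Positions of the d-dimensional puzzle with edge k: coordinates are indexed
by 0..d-1 (instead of 1..d); a position is a function nat => nat with values
< k on {..<d} and canonically 0 outside.\<close>

definition pos :: "nat \<Rightarrow> nat \<Rightarrow> (nat \<Rightarrow> nat) set" where
  "pos k d = {p. (\<forall>i<d. p i < k) \<and> (\<forall>i. d \<le> i \<longrightarrow> p i = 0)}"

definition external :: "nat \<Rightarrow> nat \<Rightarrow> (nat \<Rightarrow> nat) \<Rightarrow> bool" where
  "external k d p \<longleftrightarrow> p \<in> pos k d \<and> (\<exists>i<d. p i = 0 \<or> p i = k - 1)"

definition psi :: "nat \<Rightarrow> nat \<Rightarrow> nat \<Rightarrow> (nat \<Rightarrow> nat) \<Rightarrow> (nat \<Rightarrow> nat)" where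
  "psi k i j p = p(i := k - 1 - p j, j := p i)"

definition move :: "nat \<Rightarrow> nat \<Rightarrow> nat \<Rightarrow> nat \<Rightarrow> (nat \<Rightarrow> nat) \<Rightarrow> (nat \<Rightarrow> nat) \<Rightarrow> (nat \<Rightarrow> nat)" where
  "move k d i j c p =
     (if p \<in> pos k d \<and> (\<forall>l<d. l \<noteq> i \<and> l \<noteq> j \<longrightarrow> p l = c l) then psi k i j p else p)"

definition is_move :: "nat \<Rightarrow> nat \<Rightarrow> ((nat \<Rightarrow> nat) \<Rightarrow> (nat \<Rightarrow> nat)) \<Rightarrow> bool" where
  "is_move k d m \<longleftrightarrow> (\<exists>i j c. i < d \<and> j < d \<and> i \<noteq> j \<and>
      (\<forall>l<d. l \<noteq> i \<and> l \<noteq> j \<longrightarrow> c l < k) \<and> m = move k d i j c)"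

inductive_set comb :: "nat \<Rightarrow> nat \<Rightarrow> ((nat \<Rightarrow> nat) \<Rightarrow> (nat \<Rightarrow> nat)) set"
  for k d where
  comb_id: "id \<in> comb k d"
| comb_step: "g \<in> comb k d \<Longrightarrow> is_move k d m \<Longrightarrow> m \<circ> g \<in> comb k d"

definition conn_class :: "nat \<Rightarrow> nat \<Rightarrow> (nat \<Rightarrow> nat) set \<Rightarrow> bool" where
  "conn_class k d A \<longleftrightarrow> (\<exists>p. external k d p \<and> A = {g p | g. g \<in> comb k d})"

definition frame_class :: "nat \<Rightarrow> nat \<Rightarrow> (nat \<Rightarrow> nat) set" where
  "frame_class k d =
    (if odd k then {p \<in> pos k d. \<exists>i<d. (p i = 0 \<or> p i = k - 1) \<and>
                     (\<forall>j<d. j \<noteq> i \<longrightarrow> p j = (k - 1) div 2)}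
     else {})"

definition restr :: "nat set \<Rightarrow> (nat \<Rightarrow> nat) \<Rightarrow> (nat \<Rightarrow> nat)" where
  "restr I p = (\<lambda>t. if t < 3 then p (sorted_list_of_set I ! t) else 0)"

end

theory Submission
  imports Defs "HOL-Combinatorics.Permutations"
begin

text \<open>
  The depth of a coordinate value x is its distance min x (k - 1 - x) from the faces, and the
  multiset of depths of a position is invariant under moves. First p1 is moved to a normal form X:
  coordinate 0 on a face, coordinate 1 not central, and either a central or repeated depth among
  coordinates 0, 1, 2, or pairwise distinct non-central depths in all coordinates. Keeping X
  fixed (and then also the image of p2), the coordinates 3, ..., n - 1 of p2 and of p3 are made
  equal to those of X one at a time: the missing depth is located by the multiset invariant, and
  quarter turns in the plane of two of the coordinates 0, 1, 2 make the fixed positions differ from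
  the moving one outside the plane of the next move, so that this move leaves them in place.

  All three images then lie in the layer through X on coordinates 0, 1, 2, and their restrictions
  have equal depth multisets. In dimension 3 this determines a position up to mirroring a single
  coordinate. The mirror image is reachable when a depth is central or repeated; in the generic
  case it is excluded by an orientation invariant (the parity of the permutation sorting the
  coordinates by depth against the number of coordinates in the lower half), which lifts from
  the layer to the whole puzzle.
\<close>

section \<open>Combinations and reachability\<close>

lemma pos_eqI:
  assumes "p \<in> pos k d" "q \<in> pos k d" "\<forall>l<d. p l = q l"
  shows "p = q"
proof
  fix l
  show "p l = q l" using assms unfolding pos_def by (cases "l < d") auto
qed

lemma ex_index_neq: "2 \<le> d \<Longrightarrow> \<exists>j<d. j \<noteq> (i :: nat)"
  by (cases "i = 0") (auto intro: exI[of _ 0] exI[of _ 1])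

lemma ex_index_neq2:
  assumes "3 \<le> d"
  shows "\<exists>c<d. c \<noteq> i \<and> c \<noteq> (i' :: nat)"
proof -
  consider "0 \<noteq> i \<and> 0 \<noteq> i'" | "1 \<noteq> i \<and> 1 \<noteq> i'" | "2 \<noteq> i \<and> 2 \<noteq> i'" by force
  then show ?thesis
  proof cases
    case 1 then show ?thesis using assms by (intro exI[of _ 0]) auto
  next
    case 2 then show ?thesis using assms by (intro exI[of _ 1]) auto
  next
    case 3 then show ?thesis using assms by (intro exI[of _ 2]) auto
  qed
qed

lemma comb_comp:
  assumes "g \<in> comb k d" "h \<in> comb k d"
  shows "g \<circ> h \<in> comb k d"
  using assms(1)
proof (induction g rule: comb.induct)
  case comb_id
  then show ?case using assms(2) by simp
next
  case (comb_step g m)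
  then show ?case using comb.comb_step by (metis comp_assoc)
qed

lemma psi_in_pos: "p \<in> pos k d \<Longrightarrow> i < d \<Longrightarrow> j < d \<Longrightarrow> psi k i j p \<in> pos k d"
  unfolding pos_def psi_def by auto

lemma move_cases:
  assumes "is_move k d m" "p \<in> pos k d"
  obtains "m p = p" | i j where "i < d" "j < d" "i \<noteq> j" "m p = psi k i j p"
proof -
  obtain i j c where "i < d" "j < d" "i \<noteq> j" "m = move k d i j c"
    using assms(1) unfolding is_move_def by blast
  then show ?thesis
    using that(1) that(2)[of i j] assms(2) unfolding move_def
    by (cases "\<forall>l<d. l \<noteq> i \<and> l \<noteq> j \<longrightarrow> p l = c l") auto
qed

lemma comb_preserves:
  assumes "g \<in> comb k d" "p \<in> pos k d" "P p"
    and "\<And>q i j. q \<in> pos k d \<Longrightarrow> P q \<Longrightarrow> i < d \<Longrightarrow> j < d \<Longrightarrow> i \<noteq> j \<Longrightarrow> P (psi k i j q)"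
  shows "g p \<in> pos k d \<and> P (g p)"
  using assms(1)
proof (induction g rule: comb.induct)
  case comb_id
  then show ?case using assms(2,3) by simp
next
  case (comb_step g m)
  then have "g p \<in> pos k d" "P (g p)" by auto
  then show ?case
    using move_cases[OF comb_step.hyps(2) \<open>g p \<in> pos k d\<close>] assms(4) psi_in_pos
    by (metis comp_apply)
qed

lemma comb_in_pos: "g \<in> comb k d \<Longrightarrow> p \<in> pos k d \<Longrightarrow> g p \<in> pos k d"
  using comb_preserves[where P = "\<lambda>_. True"] by blast

definition reach_fixing ::
    "nat \<Rightarrow> nat \<Rightarrow> (nat \<Rightarrow> nat) set \<Rightarrow> (nat \<Rightarrow> nat) \<Rightarrow> (nat \<Rightarrow> nat) \<Rightarrow> bool" where
  "reach_fixing k d F p q \<longleftrightarrow> (\<exists>g\<in>comb k d. g p = q \<and> (\<forall>f\<in>F. g f = f))"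

abbreviation reach :: "nat \<Rightarrow> nat \<Rightarrow> (nat \<Rightarrow> nat) \<Rightarrow> (nat \<Rightarrow> nat) \<Rightarrow> bool" where
  "reach k d \<equiv> reach_fixing k d {}"

lemma reach_iff: "reach k d p q \<longleftrightarrow> (\<exists>g\<in>comb k d. g p = q)"
  unfolding reach_fixing_def by simp

lemma reach_comb: "g \<in> comb k d \<Longrightarrow> reach k d p (g p)"
  unfolding reach_iff by blast

lemma conn_class_reach:
  assumes "conn_class k d A"
  obtains p0 where "external k d p0" "A = {q. reach k d p0 q}"
  using assms unfolding conn_class_def reach_iff by blast

lemma reach_fixing_refl: "reach_fixing k d F p p"
  unfolding reach_fixing_def using comb.comb_id by (intro bexI[of _ id]) auto

lemma reach_fixing_trans:
  "reach_fixing k d F p q \<Longrightarrow> reach_fixing k d F q r \<Longrightarrow> reach_fixing k d F p r"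
  unfolding reach_fixing_def by (metis comb_comp comp_apply)

lemma reach_fixing_pos: "reach_fixing k d F p q \<Longrightarrow> p \<in> pos k d \<Longrightarrow> q \<in> pos k d"
  unfolding reach_fixing_def using comb_in_pos by blast

lemma reach_fixing_psi:
  assumes y: "y \<in> pos k d" and ij: "i < d" "j < d" "i \<noteq> j"
    and sep: "\<forall>f\<in>F. \<exists>l<d. l \<noteq> i \<and> l \<noteq> j \<and> f l \<noteq> y l"
  shows "reach_fixing k d F y (psi k i j y)"
proof -
  have "is_move k d (move k d i j y)"
    unfolding is_move_def using y ij unfolding pos_def by blast
  then have "move k d i j y \<in> comb k d"
    using comb.comb_step[OF comb.comb_id] by simp
  moreover have "move k d i j y y = psi k i j y"
    using y unfolding move_def by simp
  moreover have "\<forall>f\<in>F. move k d i j y f = f"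
    using sep unfolding move_def by metis
  ultimately show ?thesis unfolding reach_fixing_def by blast
qed

lemma reach_psi: "p \<in> pos k d \<Longrightarrow> i < d \<Longrightarrow> j < d \<Longrightarrow> reach k d p (psi k i j p)"
proof (cases "i = j")
  case True
  then have "psi k i j p = p" unfolding psi_def by simp
  then show ?thesis using reach_fixing_refl by metis
qed (use reach_fixing_psi in blast)

text \<open>The values of a coordinate pair (a, b) along the iterates of the quarter turn psi k a b.\<close>

fun rotations :: "nat \<Rightarrow> nat \<times> nat \<Rightarrow> (nat \<times> nat) set" where
  "rotations k (s, t) = {(s, t), (k - 1 - t, s), (k - 1 - s, k - 1 - t), (t, k - 1 - s)}"

lemma reach_fixing_rotation:
  assumes p: "p \<in> pos k d" and ab: "a < d" "b < d" "a \<noteq> b"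
    and sep: "\<forall>f\<in>F. \<exists>l<d. l \<noteq> a \<and> l \<noteq> b \<and> f l \<noteq> p l"
    and xy: "(x, y) \<in> rotations k (p a, p b)"
  shows "reach_fixing k d F p (p(a := x, b := y))"
proof -
  have turn: "reach_fixing k d F q (psi k a b q) \<and> psi k a b q \<in> pos k d"
    if "q \<in> pos k d" "\<forall>l. l \<noteq> a \<longrightarrow> l \<noteq> b \<longrightarrow> q l = p l" for q
    using reach_fixing_psi[OF that(1) ab] psi_in_pos[OF that(1) ab(1,2)] sep that(2) by metis
  define q1 where "q1 = psi k a b p"
  define q2 where "q2 = psi k a b q1"
  define q3 where "q3 = psi k a b q2"
  have pb: "p b < k" using p ab unfolding pos_def by auto
  have q1: "q1 = p(a := k - 1 - p b, b := p a)" unfolding q1_def psi_def ..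
  have q2: "q2 = p(a := k - 1 - p a, b := k - 1 - p b)" unfolding q2_def q1 psi_def using ab by auto
  have q3: "q3 = p(a := p b, b := k - 1 - p a)" unfolding q3_def q2 psi_def using ab pb by auto
  have r1: "reach_fixing k d F p q1" "q1 \<in> pos k d" unfolding q1_def using turn p by auto
  have r2: "reach_fixing k d F p q2" "q2 \<in> pos k d"
    using turn[OF r1(2)] r1(1) reach_fixing_trans unfolding q2_def q1 by auto
  have r3: "reach_fixing k d F p q3"
    using turn[OF r2(2)] r2(1) reach_fixing_trans unfolding q3_def q2 by auto
  from xy consider "(x, y) = (p a, p b)" | "(x, y) = (k - 1 - p b, p a)"
    | "(x, y) = (k - 1 - p a, k - 1 - p b)" | "(x, y) = (p b, k - 1 - p a)"
    by auto
  then show ?thesis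
    by cases (use reach_fixing_refl r1 r2 r3 q1 q2 q3 in auto)
qed

section \<open>Depths\<close>

definition depth :: "nat \<Rightarrow> nat \<Rightarrow> nat" where
  "depth k x = min x (k - 1 - x)"

definition central :: "nat \<Rightarrow> nat \<Rightarrow> bool" where
  "central k x \<longleftrightarrow> 2 * x + 1 = k"

lemma depth_flip [simp]: "x < k \<Longrightarrow> depth k (k - Suc x) = depth k x"
  unfolding depth_def by auto

lemma depth_eq_iff: "x < k \<Longrightarrow> y < k \<Longrightarrow> depth k x = depth k y \<longleftrightarrow> x = y \<or> x = k - 1 - y"
  unfolding depth_def by auto

lemma depth_eq_0_iff: "x < k \<Longrightarrow> depth k x = 0 \<longleftrightarrow> x = 0 \<or> x = k - 1"
  unfolding depth_def by auto

lemma central_depth_iff: "x < k \<Longrightarrow> central k (depth k x) \<longleftrightarrow> central k x"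
  unfolding depth_def central_def by (auto simp: min_def)

lemma central_unique: "central k x \<Longrightarrow> central k y \<Longrightarrow> x = y"
  unfolding central_def by simp

lemma depth_central: "central k x \<Longrightarrow> depth k x = x"
  unfolding depth_def central_def by simp

lemma not_central_of_depth_0: "2 \<le> k \<Longrightarrow> x < k \<Longrightarrow> depth k x = 0 \<Longrightarrow> \<not> central k x"
  unfolding depth_def central_def by auto

lemma reach_fixing_value:
  assumes p: "p \<in> pos k d" and je: "j < d" "e < d" "j \<noteq> e" and i: "i = j \<or> i = e"
    and sep: "\<forall>f\<in>F. \<exists>l<d. l \<noteq> j \<and> l \<noteq> e \<and> f l \<noteq> p l"
    and x: "x < k" and depth: "depth k (p i) = depth k x"
  shows "\<exists>q. reach_fixing k d F p q \<and> q j = x \<and> (\<forall>l. l \<noteq> j \<longrightarrow> l \<noteq> e \<longrightarrow> q l = p l)"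
proof -
  have "p i < k" using p je i unfolding pos_def by auto
  then have "p i = x \<or> p i = k - 1 - x" using depth_eq_iff x depth by blast
  then consider "p j = x" | "p j = k - 1 - x" | "p e = x" | "p e = k - 1 - x" using i by blast
  then obtain y where "(x, y) \<in> rotations k (p j, p e)"
  proof cases
    case 1 then show ?thesis using that[of "p e"] by simp
  next
    case 2 then show ?thesis using that[of "k - 1 - p e"] x by simp
  next
    case 3 then show ?thesis using that[of "k - 1 - p j"] by simp
  next
    case 4 then show ?thesis using that[of "p j"] x by simp
  qed
  then show ?thesis
    using reach_fixing_rotation[OF p je sep] je(3) by (intro exI[of _ "p(j := x, e := y)"]) auto
qed

lemma reach_flip_if_equal_depth:
  assumes p: "p \<in> pos k d" and ab: "a < d" "b < d" "a \<noteq> b"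
    and eq: "depth k (p a) = depth k (p b)"
  shows "reach k d p (p(b := k - 1 - p b))"
proof -
  have "p a < k" "p b < k" using p ab unfolding pos_def by auto
  then have "p a = p b \<or> p a = k - 1 - p b" using eq depth_eq_iff by blast
  then have "(p a, k - 1 - p b) \<in> rotations k (p a, p b)" by auto
  then show ?thesis using reach_fixing_rotation[OF p ab, of "{}" "p a" "k - 1 - p b"] by simp
qed

definition depths :: "nat \<Rightarrow> (nat \<Rightarrow> nat) \<Rightarrow> nat set \<Rightarrow> nat multiset" where
  "depths k y S = image_mset (\<lambda>i. depth k (y i)) (mset_set S)"

lemma depth_psi:
  assumes "y \<in> pos k d" "i < d" "j < d" "l < d"
  shows "depth k (psi k i j y l) = depth k (y (transpose i j l))"
  using assms unfolding psi_def pos_def by (auto simp: transpose_def)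

lemma depths_psi:
  assumes "y \<in> pos k d" "i < d" "j < d"
  shows "depths k (psi k i j y) {..<d} = depths k y {..<d}"
proof -
  have "image_mset (\<lambda>l. depth k (y l)) (mset_set {..<d}) =
      image_mset (\<lambda>l. depth k (psi k i j y l)) (mset_set {..<d})"
    by (rule permutes_implies_image_mset_eq[OF permutes_swap_id])
      (use assms in \<open>auto simp: depth_psi\<close>)
  then show ?thesis unfolding depths_def by simp
qed

lemma depths_reach_fixing:
  assumes "reach_fixing k d F p q" "p \<in> pos k d"
  shows "depths k q {..<d} = depths k p {..<d}"
  using assms comb_preserves[where P = "\<lambda>q. depths k q {..<d} = depths k p {..<d}"] depths_psi
  unfolding reach_fixing_def by (metis (no_types, lifting))

lemma mem_depths: "finite S \<Longrightarrow> x \<in># depths k y S \<longleftrightarrow> (\<exists>i\<in>S. depth k (y i) = x)"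
  unfolding depths_def by auto

lemma depths_insert:
  "finite S \<Longrightarrow> i \<notin> S \<Longrightarrow> depths k y (insert i S) = add_mset (depth k (y i)) (depths k y S)"
  unfolding depths_def by simp

lemma depths_remove:
  "finite S \<Longrightarrow> i \<in> S \<Longrightarrow> depths k y S = add_mset (depth k (y i)) (depths k y (S - {i}))"
  using depths_insert[of "S - {i}" i k y] by (simp add: insert_absorb)

lemma depths_diff:
  assumes S: "finite S" "T \<subseteq> S" and T: "\<forall>i\<in>T. depth k (y i) = depth k (z i)"
    and eq: "depths k y S = depths k z S"
  shows "depths k y (S - T) = depths k z (S - T)"
proof -
  have "mset_set S = mset_set ((S - T) \<union> T)"
    using S(2) by (simp add: Un_absorb2)
  also have "\<dots> = mset_set (S - T) + mset_set T"
    using S finite_subset by (intro mset_set_Union) auto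
  finally have split: "depths k w S = depths k w (S - T) + depths k w T" for w
    unfolding depths_def by simp
  have "depths k y T = depths k z T"
    unfolding depths_def using T finite_subset[OF S(2,1)] by (intro image_mset_cong) auto
  then show ?thesis using eq split[of y] split[of z] by simp
qed

lemma reach_value_in_depths:
  assumes u: "u \<in> pos k d" and S: "S \<subseteq> {..<d}" "j \<in> S" "e \<in> S" "j \<noteq> e"
    and x: "x < k" "depth k x \<in># depths k u S"
  shows "\<exists>q. reach k d u q \<and> q j = x \<and> (\<forall>l. l \<notin> S \<longrightarrow> q l = u l)"
proof -
  have "finite S" using S(1) finite_subset by blast
  then obtain i where i: "i \<in> S" "depth k (u i) = depth k x" using x(2) by (auto simp: mem_depths)
  define e' where "e' = (if i = j then e else i)"
  have e': "e' \<in> S" "j \<noteq> e'" "i = j \<or> i = e'" using i S unfolding e'_def by auto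
  then obtain q where "reach k d u q" "q j = x" "\<forall>l. l \<noteq> j \<longrightarrow> l \<noteq> e' \<longrightarrow> q l = u l"
    using reach_fixing_value[OF u _ _ e'(2,3) _ x(1) i(2)] S by blast
  then show ?thesis using S(2) e'(1) by metis
qed

definition generic_on :: "nat \<Rightarrow> (nat \<Rightarrow> nat) \<Rightarrow> nat set \<Rightarrow> bool" where
  "generic_on k y S \<longleftrightarrow> inj_on (\<lambda>i. depth k (y i)) S \<and> (\<forall>i\<in>S. \<not> central k (y i))"

lemma generic_on_iff_depths:
  assumes "finite S" "\<forall>i\<in>S. y i < k"
  shows "generic_on k y S \<longleftrightarrow>
    card (set_mset (depths k y S)) = card S \<and> (\<forall>x\<in>#depths k y S. \<not> central k x)"
proof -
  have "set_mset (depths k y S) = (\<lambda>i. depth k (y i)) ` S"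
    unfolding depths_def using assms(1) by simp
  then show ?thesis
    unfolding generic_on_def using assms central_depth_iff by (auto simp: inj_on_iff_eq_card)
qed

lemma generic_on_depths_eq:
  assumes "finite S" "\<forall>i\<in>S. y i < k \<and> z i < k" "depths k y S = depths k z S"
  shows "generic_on k y S \<longleftrightarrow> generic_on k z S"
  using assms generic_on_iff_depths[of S y k] generic_on_iff_depths[of S z k] by simp

section \<open>Aligning the tail coordinates\<close>

lemma exists_rotation_separating:
  assumes y: "y \<in> pos k d" and ii: "i < d" "i' < d" "i \<noteq> i'"
    and l: "l < d" "l \<noteq> i" "l \<noteq> i'"
    and F: "finite F" "card F \<le> 2" "\<forall>f\<in>F. f l \<noteq> y l"
    and nc: "\<not> (central k (y i) \<and> central k (y i'))"
  shows "\<exists>y'. reach_fixing k d F y y' \<and> (\<forall>j. j \<noteq> i \<longrightarrow> j \<noteq> i' \<longrightarrow> y' j = y j) \<and>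
    (\<forall>f\<in>F. f i \<noteq> y' i \<or> f i' \<noteq> y' i')"
proof -
  let ?R = "{(y i, y i'), (k - 1 - y i', y i), (k - 1 - y i, k - 1 - y i')}"
  let ?forbidden = "(\<lambda>f. (f i, f i')) ` F"
  have "y i < k" "y i' < k" using y ii unfolding pos_def by auto
  then have "(y i, y i') \<noteq> (k - 1 - y i', y i)" "(y i, y i') \<noteq> (k - 1 - y i, k - 1 - y i')"
    "(k - 1 - y i', y i) \<noteq> (k - 1 - y i, k - 1 - y i')"
    using nc unfolding central_def by auto
  then have "card ?R = 3" by simp
  moreover have "card ?forbidden \<le> 2" using F card_image_le order_trans by blast
  moreover have "finite ?forbidden" using F(1) by simp
  ultimately have "\<not> ?R \<subseteq> ?forbidden" using card_mono[of ?forbidden ?R] by auto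
  then obtain x x' where xx: "(x, x') \<in> ?R" "(x, x') \<notin> ?forbidden" by auto
  have "(x, x') \<in> rotations k (y i, y i')" using xx(1) by auto
  moreover have "\<forall>f\<in>F. \<exists>j<d. j \<noteq> i \<and> j \<noteq> i' \<and> f j \<noteq> y j" using F(3) l by blast
  ultimately have "reach_fixing k d F y (y(i := x, i' := x'))"
    using reach_fixing_rotation[OF y ii] by blast
  then show ?thesis using xx(2) ii(3) by (intro exI[of _ "y(i := x, i' := x')"]) auto
qed

lemma head_depths_eq:
  assumes dy: "depths k y {..<n} = depths k X {..<n}" and l: "3 \<le> l" "l < n"
    and agree: "\<forall>j<n. 3 \<le> j \<longrightarrow> j \<noteq> l \<longrightarrow> y j = X j"
  shows "{#depth k (y 0), depth k (y 1), depth k (y 2), depth k (y l)#} =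
    {#depth k (X 0), depth k (X 1), depth k (X 2), depth k (X l)#}"
proof -
  have "depths k y ({..<n} - ({..<n} - {0, 1, 2, l})) =
      depths k X ({..<n} - ({..<n} - {0, 1, 2, l}))"
    using agree by (intro depths_diff[OF _ _ _ dy]) auto
  moreover have "{..<n} - ({..<n} - {0, 1, 2, l}) = {0, 1, 2, l}" using l by auto
  ultimately show ?thesis using l by (simp add: depths_insert depths_def)
qed

lemma not_both_central_in_head:
  fixes i i' m :: nat
  assumes four: "{#depth k (y 0), depth k (y 1), depth k (y 2), depth k (y l)#} =
      {#depth k (X 0), depth k (X 1), depth k (X 2), depth k (X l)#}"
    and X: "X 0 < k" "X 1 < k" "\<not> central k (X 0)" "\<not> central k (X 1)"
    and ii: "i < 3" "i' < 3" "m < 3" "distinct [i, i', m]"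
    and a: "a = m \<or> a = l" and da: "depth k (y a) = depth k (X l)"
  shows "\<not> (central k (y i) \<and> central k (y i'))"
proof
  \<comment> \<open>otherwise y has more central depths among the coordinates 0, 1, 2, l than X\<close>
  assume c: "central k (y i) \<and> central k (y i')"
  then have yc: "depth k (y i) = y i" "depth k (y i') = y i"
    using central_unique depth_central by metis+
  have "depth k (X 0) \<noteq> y i" "depth k (X 1) \<noteq> y i"
    using X c central_depth_iff by metis+
  moreover have "count {#depth k (y 0), depth k (y 1), depth k (y 2), depth k (y l)#} (y i) =
      count {#depth k (X 0), depth k (X 1), depth k (X 2), depth k (X l)#} (y i)"
    using four by simp
  moreover have "i = 0 \<or> i = 1 \<or> i = 2" "i' = 0 \<or> i' = 1 \<or> i' = 2" "m = 0 \<or> m = 1 \<or> m = 2"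
    using ii by auto
  ultimately show False using yc a da ii(4) by (elim disjE) (auto split: if_splits)
qed

text \<open>Coordinates 0, 1, 2 serve as working space while the tail coordinates of y are made to
  agree with X one at a time.\<close>

context
  fixes k n :: nat and X :: "nat \<Rightarrow> nat" and F :: "(nat \<Rightarrow> nat) set"
  assumes n3: "3 \<le> n" and X: "X \<in> pos k n"
    and X01: "\<not> central k (X 0)" "\<not> central k (X 1)"
    and F: "finite F" "card F \<le> 2"
    and F_tail: "\<And>f l. f \<in> F \<Longrightarrow> 3 \<le> l \<Longrightarrow> l < n \<Longrightarrow> f l = X l"
begin

lemma exists_separation_off_plane:
  assumes y: "y \<in> pos k n" and dy: "depths k y {..<n} = depths k X {..<n}"
    and l: "3 \<le> l" "l < n" and aligned: "\<forall>j. 3 \<le> j \<and> j < l \<longrightarrow> y j = X j"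
    and yl: "y l \<noteq> X l"
    and m: "m < 3" and a: "a = m \<or> a = l" and da: "depth k (y a) = depth k (X l)"
  shows "\<exists>y'. reach_fixing k n F y y' \<and> (\<forall>j. 3 \<le> j \<or> j = m \<longrightarrow> y' j = y j) \<and>
    (\<forall>f\<in>F. \<exists>j<n. j \<noteq> m \<and> j \<noteq> l \<and> f j \<noteq> y' j)"
proof (cases "\<exists>j. l < j \<and> j < n \<and> y j \<noteq> X j")
  case True
  then obtain j where "l < j" "j < n" "y j \<noteq> X j" by blast
  then have "\<forall>f\<in>F. \<exists>j<n. j \<noteq> m \<and> j \<noteq> l \<and> f j \<noteq> y j" using F_tail l m by force
  then show ?thesis using reach_fixing_refl by blast
next
  case False
  define i where "i = (if m = 0 then 1 else 0 :: nat)"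
  define i' where "i' = (if m = 2 then 1 else 2 :: nat)"
  have ii: "i < 3" "i' < 3" "i \<noteq> i'" "i \<noteq> m" "i' \<noteq> m" using m unfolding i_def i'_def by auto
  have "\<forall>j<n. 3 \<le> j \<longrightarrow> j \<noteq> l \<longrightarrow> y j = X j"
    using False aligned by (metis linorder_neqE_nat)
  then have four: "{#depth k (y 0), depth k (y 1), depth k (y 2), depth k (y l)#} =
      {#depth k (X 0), depth k (X 1), depth k (X 2), depth k (X l)#}"
    using head_depths_eq[OF dy l] by blast
  have "X 0 < k" "X 1 < k" using X n3 unfolding pos_def by auto
  then have nc: "\<not> (central k (y i) \<and> central k (y i'))"
    using not_both_central_in_head[OF four _ _ X01 ii(1,2) m _ a da] ii by simp
  have iin: "i < n" "i' < n" "l \<noteq> i" "l \<noteq> i'" using ii l n3 by auto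
  have "\<forall>f\<in>F. f l \<noteq> y l" using F_tail l yl by auto
  then obtain y' where y': "reach_fixing k n F y y'" "\<forall>j. j \<noteq> i \<longrightarrow> j \<noteq> i' \<longrightarrow> y' j = y j"
      "\<forall>f\<in>F. f i \<noteq> y' i \<or> f i' \<noteq> y' i'"
    using exists_rotation_separating[OF y iin(1,2) ii(3) l(2) iin(3,4) F] nc by blast
  have "\<forall>j. 3 \<le> j \<or> j = m \<longrightarrow> y' j = y j" using y'(2) ii by auto
  moreover have "\<forall>f\<in>F. \<exists>j<n. j \<noteq> m \<and> j \<noteq> l \<and> f j \<noteq> y' j" using y'(3) ii iin by metis
  ultimately show ?thesis using y'(1) by blast
qed

lemma exists_depth_in_head:
  assumes y: "y \<in> pos k n" and dy: "depths k y {..<n} = depths k X {..<n}"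
    and l: "3 \<le> l" "l < n" and aligned: "\<forall>j. 3 \<le> j \<and> j < l \<longrightarrow> y j = X j"
    and yl: "y l \<noteq> X l"
  shows "\<exists>y' m a. reach_fixing k n F y y' \<and> (\<forall>j. 3 \<le> j \<and> j \<le> l \<longrightarrow> y' j = y j) \<and>
    m < 3 \<and> (a = m \<or> a = l) \<and> depth k (y' a) = depth k (X l)"
proof -
  have "depths k y ({..<n} - {3..<l}) = depths k X ({..<n} - {3..<l})"
    using aligned l by (intro depths_diff[OF _ _ _ dy]) auto
  moreover have "depth k (X l) \<in># depths k X ({..<n} - {3..<l})"
    using l by (auto simp: mem_depths)
  ultimately have "depth k (X l) \<in># depths k y ({..<n} - {3..<l})" by simp
  then obtain a where "a \<in> {..<n} - {3..<l}" and da: "depth k (y a) = depth k (X l)"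
    by (auto simp: mem_depths)
  then have a: "a < 3 \<or> l \<le> a \<and> a < n" "depth k (y a) = depth k (X l)" by auto
  show ?thesis
  proof (cases "l < a")
    case True
    have "\<forall>f\<in>F. \<exists>j<n. j \<noteq> a \<and> j \<noteq> 0 \<and> f j \<noteq> y j" using F_tail l yl True by force
    then have "reach_fixing k n F y (psi k a 0 y)"
      using reach_fixing_psi[OF y, of a 0] a(1) True n3 by auto
    moreover have "psi k a 0 y 0 = y a" "\<forall>j. 3 \<le> j \<and> j \<le> l \<longrightarrow> psi k a 0 y j = y j"
      using True unfolding psi_def by auto
    ultimately show ?thesis using a(2) by (metis zero_less_numeral)
  next
    case False
    then have "a < 3 \<or> a = l" using a(1) by auto
    then show ?thesis using a(2) reach_fixing_refl by (metis zero_less_numeral)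
  qed
qed

lemma fix_tail_coordinate:
  assumes y: "y \<in> pos k n" and dy: "depths k y {..<n} = depths k X {..<n}"
    and l: "3 \<le> l" "l < n" and aligned: "\<forall>j. 3 \<le> j \<and> j < l \<longrightarrow> y j = X j"
  shows "\<exists>y'. reach_fixing k n F y y' \<and> (\<forall>j. 3 \<le> j \<and> j \<le> l \<longrightarrow> y' j = X j)"
proof (cases "y l = X l")
  case True
  then have "\<forall>j. 3 \<le> j \<and> j \<le> l \<longrightarrow> y j = X j" using aligned by (auto simp: le_less)
  then show ?thesis using reach_fixing_refl by blast
next
  case yl: False
  obtain y1 m a where y1: "reach_fixing k n F y y1" "\<forall>j. 3 \<le> j \<and> j \<le> l \<longrightarrow> y1 j = y j"
      and m: "m < 3" "a = m \<or> a = l" "depth k (y1 a) = depth k (X l)"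
    using exists_depth_in_head[OF y dy l aligned yl] by blast
  have y1_pos: "y1 \<in> pos k n" using reach_fixing_pos[OF y1(1) y] .
  have dy1: "depths k y1 {..<n} = depths k X {..<n}"
    using depths_reach_fixing[OF y1(1) y] dy by simp
  have aligned1: "\<forall>j. 3 \<le> j \<and> j < l \<longrightarrow> y1 j = X j" "y1 l \<noteq> X l"
    using y1(2) aligned yl l by auto
  obtain y2 where y2: "reach_fixing k n F y1 y2" "\<forall>j. 3 \<le> j \<or> j = m \<longrightarrow> y2 j = y1 j"
      "\<forall>f\<in>F. \<exists>j<n. j \<noteq> m \<and> j \<noteq> l \<and> f j \<noteq> y2 j"
    using exists_separation_off_plane[OF y1_pos dy1 l aligned1 m] by blast
  have sep: "\<forall>f\<in>F. \<exists>j<n. j \<noteq> l \<and> j \<noteq> m \<and> f j \<noteq> y2 j" using y2(3) by blast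
  have "depth k (y2 a) = depth k (X l)" using y2(2) m l by auto
  moreover have "m < n" "l \<noteq> m" "X l < k" using m l X unfolding pos_def by auto
  ultimately obtain y3 where y3: "reach_fixing k n F y2 y3" "y3 l = X l"
      "\<forall>j. j \<noteq> l \<longrightarrow> j \<noteq> m \<longrightarrow> y3 j = y2 j"
    using reach_fixing_value[OF reach_fixing_pos[OF y2(1) y1_pos] l(2), of m a F "X l"] sep m(2)
    by blast
  have "y3 j = X j" if "3 \<le> j" "j \<le> l" for j
  proof (cases "j = l")
    case False
    then show ?thesis using that y3(3) y2(2) aligned1(1) m(1) by auto
  qed (use y3(2) in simp)
  then show ?thesis using y1(1) y2(1) y3(1) reach_fixing_trans by blast
qed

lemma align_tail:
  assumes y: "y \<in> pos k n" and dy: "depths k y {..<n} = depths k X {..<n}"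
  shows "\<exists>y'. reach_fixing k n F y y' \<and> (\<forall>j. 3 \<le> j \<and> j < n \<longrightarrow> y' j = X j)"
proof -
  have "\<exists>y'. reach_fixing k n F y y' \<and> (\<forall>j. 3 \<le> j \<and> j < l \<longrightarrow> y' j = X j)"
    if "3 \<le> l" "l \<le> n" for l
    using that
  proof (induction l rule: nat_induct_at_least)
    case base
    have "reach_fixing k n F y y" by (rule reach_fixing_refl)
    then show ?case by auto
  next
    case (Suc l)
    then obtain y' where y': "reach_fixing k n F y y'" "\<forall>j. 3 \<le> j \<and> j < l \<longrightarrow> y' j = X j"
      by auto
    have "y' \<in> pos k n" "depths k y' {..<n} = depths k X {..<n}"
      using reach_fixing_pos[OF y'(1) y] depths_reach_fixing[OF y'(1) y] dy by auto
    moreover have "3 \<le> l" "l < n" using Suc by auto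
    ultimately obtain y'' where y'': "reach_fixing k n F y' y''"
        "\<forall>j. 3 \<le> j \<and> j \<le> l \<longrightarrow> y'' j = X j"
      using fix_tail_coordinate y'(2) by blast
    then have "\<forall>j. 3 \<le> j \<and> j < Suc l \<longrightarrow> y'' j = X j" by (simp add: less_Suc_eq_le)
    then show ?case using reach_fixing_trans[OF y'(1) y''(1)] by blast
  qed
  from this[of n] show ?thesis using n3 by simp
qed

end

lemma align_tails_of_two:
  assumes n3: "3 \<le> n" and X: "X \<in> pos k n" "\<not> central k (X 0)" "\<not> central k (X 1)"
    and q: "q \<in> pos k n" "depths k q {..<n} = depths k X {..<n}"
    and q': "q' \<in> pos k n" "depths k q' {..<n} = depths k X {..<n}"
  shows "\<exists>g\<in>comb k n. g X = X \<and> (\<forall>j. 3 \<le> j \<and> j < n \<longrightarrow> g q j = X j \<and> g q' j = X j)"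
proof -
  obtain Y where Y: "reach_fixing k n {X} q Y" "\<forall>j. 3 \<le> j \<and> j < n \<longrightarrow> Y j = X j"
    using align_tail[OF n3 X, of "{X}"] q by fastforce
  then obtain g1 where g1: "g1 \<in> comb k n" "g1 q = Y" "g1 X = X"
    unfolding reach_fixing_def by blast
  have "g1 q' \<in> pos k n" "depths k (g1 q') {..<n} = depths k X {..<n}"
    using reach_fixing_pos[OF reach_comb[OF g1(1)] q'(1)]
      depths_reach_fixing[OF reach_comb[OF g1(1)] q'(1)] q'(2) by auto
  moreover have "finite {X, Y}" "card {X, Y} \<le> 2" by (auto simp: card_insert_if)
  moreover have "\<And>f l. f \<in> {X, Y} \<Longrightarrow> 3 \<le> l \<Longrightarrow> l < n \<Longrightarrow> f l = X l" using Y(2) by auto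
  ultimately obtain Z where Z: "reach_fixing k n {X, Y} (g1 q') Z"
      "\<forall>j. 3 \<le> j \<and> j < n \<longrightarrow> Z j = X j"
    using align_tail[OF n3 X] by blast
  then obtain g2 where g2: "g2 \<in> comb k n" "g2 (g1 q') = Z" "g2 X = X" "g2 Y = Y"
    unfolding reach_fixing_def by blast
  show ?thesis
    using comb_comp[OF g2(1) g1(1)] g1 g2 Y(2) Z(2) by (intro bexI[of _ "g2 \<circ> g1"]) auto
qed

section \<open>The three-dimensional puzzle\<close>

lemma reach3_up_to_flip:
  assumes u: "u \<in> pos k 3" and w: "w \<in> pos k 3"
    and du: "depths k u {..<3} = depths k w {..<3}" and j'': "j'' < 3"
  shows "\<exists>q. reach k 3 u q \<and> (q = w \<or> q = w(j'' := k - 1 - w j''))"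
proof -
  define j where "j = (if j'' = 0 then 1 else 0 :: nat)"
  define j' where "j' = (if j'' = 2 then 1 else 2 :: nat)"
  have jj: "j \<noteq> j'" "j \<noteq> j''" "j' \<noteq> j''" and three: "{..<3} = {j, j', j''}"
    using j'' unfolding j_def j'_def by auto
  have wk: "w j < k" "w j' < k" "w j'' < k" using w three unfolding pos_def by auto
  have "depth k (w j) \<in># depths k w {..<3}" using three by (auto simp: mem_depths)
  then obtain q1 where q1: "reach k 3 u q1" "q1 j = w j"
    using reach_value_in_depths[where S = "{..<3}", OF u _ _ _ jj(1) wk(1)] du three by auto
  have q1_pos: "q1 \<in> pos k 3" using reach_fixing_pos[OF q1(1) u] .
  have "depths k q1 ({..<3} - {j}) = depths k w ({..<3} - {j})"
    using depths_reach_fixing[OF q1(1) u] du q1(2) three by (intro depths_diff) auto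
  moreover have "{..<3} - {j} = {j', j''}" unfolding three using jj by auto
  moreover have "depth k (w j') \<in># depths k w {j', j''}" by (simp add: depths_def)
  ultimately obtain q2 where q2: "reach k 3 q1 q2" "q2 j' = w j'" "\<forall>l. l \<notin> {j', j''} \<longrightarrow> q2 l = q1 l"
    using reach_value_in_depths[where S = "{j', j''}", OF q1_pos _ _ _ jj(3) wk(2)] three by auto
  have q2_pos: "q2 \<in> pos k 3" using reach_fixing_pos[OF q2(1) q1_pos] .
  have q2j: "q2 j = w j" using q2(3) q1(2) jj by auto
  have "depths k q2 ({..<3} - {j, j'}) = depths k w ({..<3} - {j, j'})"
    using depths_reach_fixing[OF q2(1) q1_pos] depths_reach_fixing[OF q1(1) u] du q2j q2(2) three
    by (intro depths_diff) auto
  moreover have "{..<3} - {j, j'} = {j''}" unfolding three using jj by auto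
  ultimately have "depth k (q2 j'') = depth k (w j'')" by (simp add: depths_def)
  moreover have "q2 j'' < k" using q2_pos j'' unfolding pos_def by auto
  ultimately have "q2 j'' = w j'' \<or> q2 j'' = k - 1 - w j''" using depth_eq_iff wk(3) by blast
  moreover have "w(j'' := k - 1 - w j'') \<in> pos k 3" using w wk j'' unfolding pos_def by auto
  moreover have "\<forall>l<3. l = j \<or> l = j' \<or> l = j''" using three by auto
  ultimately have "q2 = w \<or> q2 = w(j'' := k - 1 - w j'')"
    using pos_eqI[OF q2_pos] w q2j q2(2) jj by (metis fun_upd_other fun_upd_same)
  then show ?thesis using reach_fixing_trans[OF q1(1) q2(1)] by blast
qed

lemma reach3_if_not_generic:
  assumes u: "u \<in> pos k 3" and w: "w \<in> pos k 3"
    and du: "depths k u {..<3} = depths k w {..<3}" and ng: "\<not> generic_on k w {..<3}"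
  shows "reach k 3 u w"
proof -
  obtain j'' where j'': "j'' < 3" "reach k 3 (w(j'' := k - 1 - w j'')) w"
  proof (cases "\<exists>j<3. central k (w j)")
    case True
    then obtain j where "j < 3" "central k (w j)" by blast
    then have "w(j := k - 1 - w j) = w" unfolding central_def by auto
    then show ?thesis using that \<open>j < 3\<close> reach_fixing_refl by metis
  next
    case False
    then obtain j' j'' where jj: "j' < 3" "j'' < 3" "j' \<noteq> j''" "depth k (w j') = depth k (w j'')"
      using ng unfolding generic_on_def inj_on_def by auto
    define q where "q = w(j'' := k - 1 - w j'')"
    have "w j'' < k" using w jj unfolding pos_def by auto
    then have "q \<in> pos k 3" "depth k (q j') = depth k (q j'')" "q(j'' := k - 1 - q j'') = w"
      using w jj unfolding q_def pos_def by auto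
    then show ?thesis
      using that jj(2) reach_flip_if_equal_depth[of q k 3 j' j''] jj unfolding q_def by metis
  qed
  obtain q where "reach k 3 u q" "q = w \<or> q = w(j'' := k - 1 - w j'')"
    using reach3_up_to_flip[OF u w du j''(1)] by blast
  then show ?thesis using j''(2) reach_fixing_trans by metis
qed

section \<open>The orientation invariant\<close>

definition depth_rank :: "nat \<Rightarrow> nat \<Rightarrow> (nat \<Rightarrow> nat) \<Rightarrow> nat \<Rightarrow> nat" where
  "depth_rank k d y i = (if i < d then card {j. j < d \<and> depth k (y j) < depth k (y i)} else i)"

definition low_count :: "nat \<Rightarrow> nat \<Rightarrow> (nat \<Rightarrow> nat) \<Rightarrow> nat" where
  "low_count k d y = (\<Sum>l<d. if 2 * y l + 1 < k then 1 else 0)"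

text \<open>On generic positions a move transposes the depth ranks of two coordinates and carries
  exactly one value across the middle, so it changes both parities below; their agreement is
  the invariant that separates a generic position from its mirror image in one coordinate.\<close>

definition orientation :: "nat \<Rightarrow> nat \<Rightarrow> (nat \<Rightarrow> nat) \<Rightarrow> bool" where
  "orientation k d y \<longleftrightarrow> (evenperm (depth_rank k d y) \<longleftrightarrow> even (low_count k d y))"

lemma depth_rank_less: "i < d \<Longrightarrow> depth_rank k d y i < d"
proof -
  assume "i < d"
  then have "{j. j < d \<and> depth k (y j) < depth k (y i)} \<subseteq> {..<d} - {i}" by auto
  then have "card {j. j < d \<and> depth k (y j) < depth k (y i)} \<le> card ({..<d} - {i})"
    by (intro card_mono) auto
  then show ?thesis using \<open>i < d\<close> unfolding depth_rank_def by simp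
qed

lemma inj_on_depth_rank:
  assumes inj: "inj_on (\<lambda>i. depth k (y i)) {..<d}"
  shows "inj_on (depth_rank k d y) {..<d}"
proof -
  have less: "depth_rank k d y i < depth_rank k d y i'"
    if "i < d" "i' < d" "depth k (y i) < depth k (y i')" for i i'
  proof -
    have "{j. j < d \<and> depth k (y j) < depth k (y i)} \<subset> {j. j < d \<and> depth k (y j) < depth k (y i')}"
      using that by auto
    then have "card {j. j < d \<and> depth k (y j) < depth k (y i)} <
        card {j. j < d \<and> depth k (y j) < depth k (y i')}"
      by (intro psubset_card_mono) auto
    then show ?thesis using that unfolding depth_rank_def by simp
  qed
  show ?thesis
  proof (rule inj_onI)
    fix i i' assume a: "i \<in> {..<d}" "i' \<in> {..<d}" "depth_rank k d y i = depth_rank k d y i'"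
    show "i = i'"
    proof (rule ccontr)
      assume "i \<noteq> i'"
      then have "depth k (y i) \<noteq> depth k (y i')" using inj a(1,2) by (auto dest: inj_onD)
      then show False
        using less[of i i'] less[of i' i] a by (cases "depth k (y i) < depth k (y i')") auto
    qed
  qed
qed

lemma depth_rank_permutes:
  assumes "inj_on (\<lambda>i. depth k (y i)) {..<d}"
  shows "depth_rank k d y permutes {..<d}"
proof (rule bij_imp_permutes)
  have "depth_rank k d y ` {..<d} \<subseteq> {..<d}" using depth_rank_less by auto
  then show "bij_betw (depth_rank k d y) {..<d} {..<d}"
    using inj_on_depth_rank[OF assms] by (simp add: bij_betw_def endo_inj_surj)
  show "\<And>x. x \<notin> {..<d} \<Longrightarrow> depth_rank k d y x = x" unfolding depth_rank_def by simp
qed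

lemma depth_rank_psi:
  assumes y: "y \<in> pos k d" and ij: "i < d" "j < d"
  shows "depth_rank k d (psi k i j y) = depth_rank k d y \<circ> transpose i j"
proof
  fix l
  show "depth_rank k d (psi k i j y) l = (depth_rank k d y \<circ> transpose i j) l"
  proof (cases "l < d")
    case True
    let ?t = "transpose i j"
    have tl: "?t l < d" using True ij by (auto simp: transpose_def)
    have "{j'. j' < d \<and> depth k (psi k i j y j') < depth k (psi k i j y l)} =
        ?t ` {j'. j' < d \<and> depth k (y j') < depth k (y (?t l))}"
      using depth_psi[OF y ij] True ij by (auto simp: image_iff transpose_def split: if_splits)
    then have "card {j'. j' < d \<and> depth k (psi k i j y j') < depth k (psi k i j y l)} =
        card {j'. j' < d \<and> depth k (y j') < depth k (y (?t l))}"
      by (simp add: card_image inj_on_transpose)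
    then show ?thesis unfolding depth_rank_def using True tl by simp
  next
    case False
    then have "transpose i j l = l" using ij by (auto simp: transpose_def)
    then show ?thesis unfolding depth_rank_def using False by simp
  qed
qed

lemma low_count_split:
  assumes "i < d" "j < d" "i \<noteq> j"
  shows "low_count k d y = (if 2 * y i + 1 < k then 1 else 0) + (if 2 * y j + 1 < k then 1 else 0) +
     (\<Sum>l\<in>{..<d} - {i, j}. if 2 * y l + 1 < k then 1 else 0)"
proof -
  have "low_count k d y =
      (if 2 * y i + 1 < k then 1 else 0) + (\<Sum>l\<in>{..<d} - {i}. if 2 * y l + 1 < k then 1 else 0)"
    unfolding low_count_def using assms by (subst sum.remove[of _ i]) auto
  also have "(\<Sum>l\<in>{..<d} - {i}. (if 2 * y l + 1 < k then 1 else 0::nat)) =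
      (if 2 * y j + 1 < k then 1 else 0) +
      (\<Sum>l\<in>{..<d} - {i} - {j}. if 2 * y l + 1 < k then 1 else 0)"
    using assms by (subst sum.remove[of _ j]) auto
  finally show ?thesis by (simp add: Diff_insert2[symmetric] insert_commute add.assoc)
qed

lemma even_low_count_psi:
  assumes y: "y \<in> pos k d" and ij: "i < d" "j < d" "i \<noteq> j" and nc: "\<not> central k (y j)"
  shows "even (low_count k d (psi k i j y)) \<longleftrightarrow> \<not> even (low_count k d y)"
proof -
  have "y j < k" using y ij unfolding pos_def by auto
  then have "2 * (k - 1 - y j) + 1 < k \<longleftrightarrow> \<not> 2 * y j + 1 < k" using nc unfolding central_def by auto
  moreover have "(\<Sum>l\<in>{..<d} - {i, j}. if 2 * psi k i j y l + 1 < k then 1 else 0::nat) =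
      (\<Sum>l\<in>{..<d} - {i, j}. if 2 * y l + 1 < k then 1 else 0)"
    by (rule sum.cong) (auto simp: psi_def)
  moreover have "psi k i j y i = k - 1 - y j" "psi k i j y j = y i"
    using ij unfolding psi_def by auto
  ultimately show ?thesis
    using low_count_split[OF ij, of k "psi k i j y"] low_count_split[OF ij, of k y] by auto
qed

lemma orientation_psi:
  assumes y: "y \<in> pos k d" and ij: "i < d" "j < d" "i \<noteq> j" and g: "generic_on k y {..<d}"
  shows "orientation k d (psi k i j y) \<longleftrightarrow> orientation k d y"
proof -
  have "permutation (depth_rank k d y)"
    using depth_rank_permutes g unfolding generic_on_def by (blast intro: permutes_imp_permutation)
  then have "evenperm (depth_rank k d y \<circ> transpose i j) \<longleftrightarrow>
      evenperm (depth_rank k d y) = evenperm (transpose i j)"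
    by (rule evenperm_comp[OF _ permutation_swap_id])
  then have "evenperm (depth_rank k d (psi k i j y)) \<longleftrightarrow> \<not> evenperm (depth_rank k d y)"
    unfolding depth_rank_psi[OF y ij(1,2)] by (simp add: evenperm_swap ij(3))
  moreover have "even (low_count k d (psi k i j y)) \<longleftrightarrow> \<not> even (low_count k d y)"
    using even_low_count_psi[OF y ij] g ij unfolding generic_on_def by blast
  ultimately show ?thesis unfolding orientation_def by blast
qed

lemma orientation_reach:
  assumes "reach k d p q" "p \<in> pos k d" "generic_on k p {..<d}"
  shows "orientation k d q \<longleftrightarrow> orientation k d p"
proof -
  have "generic_on k (psi k i j y) {..<d}"
    if "y \<in> pos k d" "i < d" "j < d" "generic_on k y {..<d}" for y i j
    using generic_on_depths_eq[of "{..<d}" "psi k i j y" k y] depths_psi psi_in_pos that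
    unfolding pos_def by auto
  then show ?thesis
    using assms orientation_psi
      comb_preserves[where
        P = "\<lambda>q. generic_on k q {..<d} \<and> (orientation k d q \<longleftrightarrow> orientation k d p)"]
    unfolding reach_iff by metis
qed

lemma orientation_flip:
  assumes y: "y \<in> pos k d" and a: "a < d" and g: "generic_on k y {..<d}"
  shows "orientation k d (y(a := k - 1 - y a)) \<longleftrightarrow> \<not> orientation k d y"
proof -
  have ya: "y a < k" using y a unfolding pos_def by auto
  then have "depth k ((y(a := k - 1 - y a)) j) = depth k (y j)" for j by simp
  then have "depth_rank k d (y(a := k - 1 - y a)) = depth_rank k d y"
    unfolding depth_rank_def by presburger
  moreover have "even (low_count k d (y(a := k - 1 - y a))) \<longleftrightarrow> \<not> even (low_count k d y)"
  proof -
    have split: "low_count k d z = (if 2 * z a + 1 < k then 1 else 0) +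
        (\<Sum>l\<in>{..<d} - {a}. if 2 * z l + 1 < k then 1 else 0)" for z
      unfolding low_count_def using a by (subst sum.remove[of _ a]) auto
    have "(\<Sum>l\<in>{..<d} - {a}. if 2 * (y(a := k - 1 - y a)) l + 1 < k then 1 else 0::nat) =
        (\<Sum>l\<in>{..<d} - {a}. if 2 * y l + 1 < k then 1 else 0)"
      by (rule sum.cong) auto
    moreover have "\<not> central k (y a)" using g a unfolding generic_on_def by auto
    then have "2 * (k - 1 - y a) + 1 < k \<longleftrightarrow> \<not> 2 * y a + 1 < k"
      using ya unfolding central_def by auto
    ultimately show ?thesis using split[of y] split[of "y(a := k - 1 - y a)"] by auto
  qed
  ultimately show ?thesis unfolding orientation_def by auto
qed

section \<open>The layer of coordinates 0, 1, 2\<close>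

definition lift :: "(nat \<Rightarrow> nat) \<Rightarrow> (nat \<Rightarrow> nat) \<Rightarrow> nat \<Rightarrow> nat" where
  "lift X u = (\<lambda>l. if l < 3 then u l else X l)"

lemma restr_012: "restr {0, 1, 2} q = (\<lambda>l. if l < 3 then q l else 0)"
proof -
  have "{0, 1, 2 :: nat} = {0..<3}" by auto
  then have "sorted_list_of_set {0, 1, 2 :: nat} = [0..<3]" by simp
  then show ?thesis unfolding restr_def by (intro ext) simp
qed

lemma restr_in_pos: "3 \<le> n \<Longrightarrow> q \<in> pos k n \<Longrightarrow> restr {0, 1, 2} q \<in> pos k 3"
  unfolding restr_012 pos_def by auto

lemma lift_restr:
  assumes "q \<in> pos k n" "X \<in> pos k n" "\<forall>l. 3 \<le> l \<and> l < n \<longrightarrow> q l = X l"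
  shows "lift X (restr {0, 1, 2} q) = q"
proof
  fix l
  show "lift X (restr {0, 1, 2} q) l = q l"
    using assms unfolding lift_def restr_012 pos_def by (cases "l < 3"; cases "l < n") auto
qed

lemma lift_in_pos: "X \<in> pos k n \<Longrightarrow> 3 \<le> n \<Longrightarrow> u \<in> pos k 3 \<Longrightarrow> lift X u \<in> pos k n"
  unfolding lift_def pos_def by auto

lemma lift_upd: "j < 3 \<Longrightarrow> lift X (w(j := v)) = (lift X w)(j := v)"
  unfolding lift_def by auto

lemma lift_move:
  assumes X: "X \<in> pos k n" and n3: "3 \<le> n" and ij: "i < 3" "j < 3" and w: "w \<in> pos k 3"
  shows "move k n i j (lift X c) (lift X w) = lift X (move k 3 i j c w)"
proof -
  have layer: "(\<forall>l<n. l \<noteq> i \<and> l \<noteq> j \<longrightarrow> lift X w l = lift X c l) \<longleftrightarrow>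
      (\<forall>l<3. l \<noteq> i \<and> l \<noteq> j \<longrightarrow> w l = c l)"
    using n3 unfolding lift_def by auto
  have "psi k i j (lift X w) = lift X (psi k i j w)"
    using ij unfolding psi_def lift_def by auto
  show ?thesis
  proof (cases "\<forall>l<3. l \<noteq> i \<and> l \<noteq> j \<longrightarrow> w l = c l")
    case True
    then show ?thesis unfolding move_def
      using lift_in_pos[OF X n3 w] w layer \<open>psi k i j (lift X w) = _\<close> by simp
  next
    case False
    then have "move k n i j (lift X c) (lift X w) = lift X w" "move k 3 i j c w = w"
      unfolding move_def using layer by metis+
    then show ?thesis by simp
  qed
qed

lemma lift_comb:
  assumes X: "X \<in> pos k n" and n3: "3 \<le> n" and h: "h \<in> comb k 3"
  shows "\<exists>H\<in>comb k n. \<forall>u\<in>pos k 3. H (lift X u) = lift X (h u)"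
  using h
proof (induction h rule: comb.induct)
  case comb_id
  then show ?case using comb.comb_id by (intro bexI[of _ id]) auto
next
  case (comb_step h m)
  obtain H where H: "H \<in> comb k n" "\<forall>u\<in>pos k 3. H (lift X u) = lift X (h u)"
    using comb_step.IH by blast
  obtain i j c where m: "i < 3" "j < 3" "i \<noteq> j" "\<forall>l<3. l \<noteq> i \<and> l \<noteq> j \<longrightarrow> c l < k"
      "m = move k 3 i j c"
    using comb_step.hyps(2) unfolding is_move_def by blast
  have "\<forall>l<n. l \<noteq> i \<and> l \<noteq> j \<longrightarrow> lift X c l < k" using m X unfolding lift_def pos_def by auto
  then have "is_move k n (move k n i j (lift X c))"
    unfolding is_move_def using m n3 by (intro exI[of _ i] exI[of _ j] exI[of _ "lift X c"]) auto
  then have "move k n i j (lift X c) \<circ> H \<in> comb k n" using comb.comb_step[OF H(1)] by blast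
  moreover have "\<forall>u\<in>pos k 3. (move k n i j (lift X c) \<circ> H) (lift X u) = lift X ((m \<circ> h) u)"
    using H(2) lift_move[OF X n3 m(1,2) comb_in_pos[OF comb_step.hyps(1)]] m(5) by simp
  ultimately show ?case by blast
qed

lemma reach_lift:
  assumes "reach k 3 u v" "u \<in> pos k 3" "X \<in> pos k n" "3 \<le> n"
  shows "reach k n (lift X u) (lift X v)"
proof -
  obtain h where "h \<in> comb k 3" "h u = v" using assms(1) unfolding reach_iff by blast
  then obtain H where "H \<in> comb k n" "H (lift X u) = lift X v"
    using lift_comb[OF assms(3,4)] assms(2) by blast
  then show ?thesis unfolding reach_iff by blast
qed

lemma depths_restr:
  assumes n3: "3 \<le> n" and tail: "\<forall>l. 3 \<le> l \<and> l < n \<longrightarrow> W l = X l"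
    and dW: "depths k W {..<n} = depths k X {..<n}"
  shows "depths k (restr {0, 1, 2} W) {..<3} = depths k (restr {0, 1, 2} X) {..<3}"
proof -
  have restr: "depths k (restr {0, 1, 2} q) {..<3} = depths k q {..<3}" for q
    unfolding depths_def restr_012 by (intro image_mset_cong) auto
  have "depths k W ({..<n} - {3..<n}) = depths k X ({..<n} - {3..<n})"
    using tail by (intro depths_diff[OF _ _ _ dW]) auto
  moreover have "{..<n} - {3..<n} = {..<3}" using n3 by auto
  ultimately show ?thesis unfolding restr by simp
qed

lemma generic_on_restr: "generic_on k (restr {0, 1, 2} q) {..<3} \<longleftrightarrow> generic_on k q {0, 1, 2}"
proof -
  have "{..<3} = {0, 1, 2 :: nat}" by auto
  moreover have "\<forall>i\<in>{0, 1, 2}. restr {0, 1, 2} q i = q i" unfolding restr_012 by simp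
  ultimately show ?thesis unfolding generic_on_def by (metis (mono_tags, lifting) inj_on_cong)
qed

lemma reach3_if_orientation_eq:
  assumes n3: "3 \<le> n" and X: "X \<in> pos k n" and W: "W \<in> pos k n"
    and tail: "\<forall>l. 3 \<le> l \<and> l < n \<longrightarrow> W l = X l" and dW: "depths k W {..<n} = depths k X {..<n}"
    and g: "generic_on k X {..<n}" and o: "orientation k n W \<longleftrightarrow> orientation k n X"
  shows "reach k 3 (restr {0, 1, 2} X) (restr {0, 1, 2} W)"
proof -
  let ?u = "restr {0, 1, 2} X" and ?w = "restr {0, 1, 2} W"
  have u: "?u \<in> pos k 3" and w: "?w \<in> pos k 3" using restr_in_pos n3 X W by auto
  obtain q where q: "reach k 3 ?u q" "q = ?w \<or> q = ?w(2 := k - 1 - ?w 2)"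
    using reach3_up_to_flip[OF u w depths_restr[OF n3 tail dW, symmetric], of 2] by auto
  show ?thesis
  proof (cases "q = ?w")
    case False
    have "lift X q = W(2 := k - 1 - W 2)"
      using q(2) False lift_upd lift_restr[OF W X tail] unfolding restr_012 by simp
    then have "reach k n X (W(2 := k - 1 - W 2))"
      using reach_lift[OF q(1) u X n3] lift_restr[OF X X] by simp
    then have "orientation k n (W(2 := k - 1 - W 2)) \<longleftrightarrow> orientation k n W"
      using orientation_reach[OF _ X g] o by simp
    moreover have "generic_on k W {..<n}"
      using g generic_on_depths_eq[of "{..<n}" W k X] dW X W unfolding pos_def by simp
    ultimately show ?thesis using orientation_flip[OF W, of 2] n3 by simp
  qed (use q in simp)
qed

lemma reach3_in_orbit:
  assumes n3: "3 \<le> n" and p0: "p0 \<in> pos k n" and X: "reach k n p0 X" and W: "reach k n p0 W"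
    and tail: "\<forall>l. 3 \<le> l \<and> l < n \<longrightarrow> W l = X l"
    and rigid: "\<not> generic_on k X {0, 1, 2} \<or> generic_on k X {..<n}"
  shows "reach k 3 (restr {0, 1, 2} X) (restr {0, 1, 2} W)"
proof -
  have X_pos: "X \<in> pos k n" and W_pos: "W \<in> pos k n" using reach_fixing_pos X W p0 by auto
  have dX: "depths k X {..<n} = depths k p0 {..<n}" and dW: "depths k W {..<n} = depths k X {..<n}"
    using depths_reach_fixing X W p0 by auto
  have bounded: "\<forall>i\<in>S. q i < k \<and> q' i < k" if "q \<in> pos k n" "q' \<in> pos k n" "S \<subseteq> {..<n}" for q q' S
    using that unfolding pos_def by auto
  from rigid show ?thesis
  proof
    assume ng: "\<not> generic_on k X {0, 1, 2}"
    have "generic_on k (restr {0, 1, 2} W) {..<3} \<longleftrightarrow> generic_on k (restr {0, 1, 2} X) {..<3}"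
      using depths_restr[OF n3 tail dW] restr_in_pos[OF n3] X_pos W_pos
      by (intro generic_on_depths_eq) (auto simp: pos_def)
    then have "\<not> generic_on k (restr {0, 1, 2} W) {..<3}" using ng generic_on_restr by simp
    then show ?thesis
      by (rule reach3_if_not_generic[OF restr_in_pos[OF n3 X_pos] restr_in_pos[OF n3 W_pos]
            depths_restr[OF n3 tail dW, symmetric]])
  next
    assume g: "generic_on k X {..<n}"
    then have "generic_on k p0 {..<n}"
      using generic_on_depths_eq[OF _ bounded[OF X_pos p0] dX] by simp
    then have "orientation k n W \<longleftrightarrow> orientation k n X"
      using orientation_reach X W p0 by metis
    then show ?thesis using reach3_if_orientation_eq[OF n3 X_pos W_pos tail dW g] by simp
  qed
qed

section \<open>Frame positions and the normal form\<close>

definition frame_shaped :: "nat \<Rightarrow> nat \<Rightarrow> (nat \<Rightarrow> nat) \<Rightarrow> bool" where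
  "frame_shaped k d q \<longleftrightarrow> (\<exists>i<d. depth k (q i) = 0 \<and> (\<forall>j<d. j \<noteq> i \<longrightarrow> central k (q j)))"

lemma frame_shaped_iff_depths:
  assumes q: "q \<in> pos k d"
  shows "frame_shaped k d q \<longleftrightarrow>
    0 \<in># depths k q {..<d} \<and> (\<forall>x\<in>#depths k q {..<d} - {#0#}. central k x)"
proof -
  have central: "central k (depth k (q j)) \<longleftrightarrow> central k (q j)" if "j < d" for j
    using q that central_depth_iff unfolding pos_def by blast
  have rest: "depths k q {..<d} - {#0#} = depths k q ({..<d} - {i})"
    if "i < d" "depth k (q i) = 0" for i
    using depths_remove[of "{..<d}" i k q] that by simp
  show ?thesis
  proof
    assume "frame_shaped k d q"
    then obtain i where i: "i < d" "depth k (q i) = 0" "\<forall>j<d. j \<noteq> i \<longrightarrow> central k (q j)"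
      unfolding frame_shaped_def by blast
    then have "0 \<in># depths k q {..<d}" by (auto simp: mem_depths)
    moreover have "\<forall>x\<in>#depths k q ({..<d} - {i}). central k x"
    proof
      fix x assume "x \<in># depths k q ({..<d} - {i})"
      then obtain j where "j < d" "j \<noteq> i" "depth k (q j) = x" by (auto simp: mem_depths)
      then show "central k x" using i(3) central by blast
    qed
    ultimately show "0 \<in># depths k q {..<d} \<and> (\<forall>x\<in>#depths k q {..<d} - {#0#}. central k x)"
      using rest[OF i(1,2)] by simp
  next
    assume D: "0 \<in># depths k q {..<d} \<and> (\<forall>x\<in>#depths k q {..<d} - {#0#}. central k x)"
    then obtain i where i: "i < d" "depth k (q i) = 0" by (auto simp: mem_depths)
    then have rest_central: "\<forall>x\<in>#depths k q ({..<d} - {i}). central k x" using D rest by simp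
    have "central k (q j)" if "j < d" "j \<noteq> i" for j
    proof -
      have "depth k (q j) \<in># depths k q ({..<d} - {i})" using that by (auto simp: mem_depths)
      then show ?thesis using rest_central central that(1) by blast
    qed
    then have "\<forall>j<d. j \<noteq> i \<longrightarrow> central k (q j)" by blast
    then show "frame_shaped k d q" unfolding frame_shaped_def using i by blast
  qed
qed

lemma frame_class_eq:
  assumes "odd k"
  shows "frame_class k d = {q \<in> pos k d. frame_shaped k d q}"
proof -
  have central: "central k x \<longleftrightarrow> x = (k - 1) div 2" for x
    using assms unfolding central_def by presburger
  have face: "depth k (q i) = 0 \<longleftrightarrow> q i = 0 \<or> q i = k - 1" if "q \<in> pos k d" "i < d" for q i
    using depth_eq_0_iff that unfolding pos_def by blast
  show ?thesis
  proof (intro set_eqI iffI)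
    fix q assume "q \<in> frame_class k d"
    then obtain i where "q \<in> pos k d" "i < d" "q i = 0 \<or> q i = k - 1"
        "\<forall>j<d. j \<noteq> i \<longrightarrow> q j = (k - 1) div 2"
      unfolding frame_class_def using assms by auto
    then show "q \<in> {q \<in> pos k d. frame_shaped k d q}"
      unfolding frame_shaped_def central using face by blast
  next
    fix q assume "q \<in> {q \<in> pos k d. frame_shaped k d q}"
    then obtain i where "q \<in> pos k d" "i < d" "depth k (q i) = 0"
        "\<forall>j<d. j \<noteq> i \<longrightarrow> q j = (k - 1) div 2"
      unfolding frame_shaped_def central by blast
    then show "q \<in> frame_class k d" unfolding frame_class_def using assms face by auto
  qed
qed

lemma frame_shaped_depths_eq:
  assumes "p \<in> pos k d" "q \<in> pos k d" "depths k p {..<d} = depths k q {..<d}"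
  shows "frame_shaped k d p \<longleftrightarrow> frame_shaped k d q"
  using assms frame_shaped_iff_depths by metis

lemma frame_class_subset_orbit:
  assumes k2: "2 \<le> k" and d: "2 \<le> d" and ok: "odd k" and p: "p \<in> pos k d" "frame_shaped k d p"
  shows "frame_class k d \<subseteq> {q. reach k d p q}"
proof
  fix q assume "q \<in> frame_class k d"
  then have q: "q \<in> pos k d" "frame_shaped k d q" unfolding frame_class_eq[OF ok] by auto
  obtain j0 where j0: "j0 < d" "depth k (q j0) = 0" "\<forall>l<d. l \<noteq> j0 \<longrightarrow> central k (q l)"
    using q(2) unfolding frame_shaped_def by blast
  obtain e where "e < d" "e \<noteq> j0" using ex_index_neq[OF d] by blast
  moreover have "q j0 < k" using q j0 unfolding pos_def by auto
  moreover have "0 \<in># depths k p {..<d}"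
    using p(2) frame_shaped_iff_depths[OF p(1)] by blast
  ultimately obtain r where r: "reach k d p r" "r j0 = q j0"
    using reach_value_in_depths[OF p(1), of "{..<d}" j0 e "q j0"] j0 by auto
  have r_pos: "r \<in> pos k d" using reach_fixing_pos[OF r(1) p(1)] .
  have "frame_shaped k d r"
    using frame_shaped_depths_eq[OF r_pos p(1)] depths_reach_fixing[OF r(1) p(1)] p(2) by blast
  then obtain i' where i': "i' < d" "\<forall>l<d. l \<noteq> i' \<longrightarrow> central k (r l)"
    unfolding frame_shaped_def by blast
  have "\<not> central k (r j0)" using not_central_of_depth_0[OF k2 \<open>q j0 < k\<close> j0(2)] r(2) by simp
  then have "i' = j0" using i' j0(1) by blast
  then have "\<forall>l<d. r l = q l" using r(2) i'(2) j0(3) central_unique by metis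
  then show "q \<in> {q. reach k d p q}" using pos_eqI[OF r_pos q(1)] r(1) by auto
qed

lemma not_frame_shaped_in_class:
  assumes k2: "2 \<le> k" and d: "2 \<le> d" and A: "conn_class k d A" and nf: "A \<noteq> frame_class k d"
    and p: "p \<in> A"
  shows "\<not> frame_shaped k d p"
proof
  assume fp: "frame_shaped k d p"
  obtain p0 where p0: "external k d p0" "A = {q. reach k d p0 q}" using A by (rule conn_class_reach)
  have p0_pos: "p0 \<in> pos k d" using p0(1) unfolding external_def by blast
  have p_reach: "reach k d p0 p" and p_pos: "p \<in> pos k d"
    using p p0(2) reach_fixing_pos p0_pos by auto
  obtain i0 where "i0 < d" "\<forall>j<d. j \<noteq> i0 \<longrightarrow> central k (p j)"
    using fp unfolding frame_shaped_def by blast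
  moreover obtain j where "j < d" "j \<noteq> i0" using ex_index_neq[OF d] by blast
  ultimately have ok: "odd k" unfolding central_def by force
  have "A \<subseteq> frame_class k d"
  proof
    fix q assume "q \<in> A"
    then have "q \<in> pos k d" "depths k q {..<d} = depths k p {..<d}"
      using p0(2) reach_fixing_pos depths_reach_fixing p_reach p0_pos by auto
    then show "q \<in> frame_class k d"
      using frame_shaped_depths_eq p_pos fp unfolding frame_class_eq[OF ok] by blast
  qed
  moreover have "frame_class k d \<subseteq> A"
    using frame_class_subset_orbit[OF k2 d ok p_pos fp] reach_fixing_trans[OF p_reach] p0(2) by auto
  ultimately show False using nf by blast
qed

lemma exists_reach_depths_to_front:
  assumes p: "p \<in> pos k n" and n3: "3 \<le> n"
    and a: "a0 < n" "a1 < n" "a2 < n" "distinct [a0, a1, a2]"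
  shows "\<exists>X. reach k n p X \<and> depth k (X 0) = depth k (p a0) \<and>
    depth k (X 1) = depth k (p a1) \<and> depth k (X 2) = depth k (p a2)"
proof -
  define t1 where "t1 = transpose 0 a0"
  define b1 where "b1 = t1 a1"
  define t2 where "t2 = transpose 1 b1"
  define b2 where "b2 = t2 (t1 a2)"
  define q1 where "q1 = psi k 0 a0 p"
  define q2 where "q2 = psi k 1 b1 q1"
  define q3 where "q3 = psi k 2 b2 q2"
  have n0: "0 < n" "1 < n" "2 < n" using n3 by auto
  have b1: "b1 < n" "b1 \<noteq> 0" unfolding b1_def t1_def using a n0 by (auto simp: transpose_def)
  have t1a2: "t1 a2 < n" "t1 a2 \<noteq> 0" "t1 a2 \<noteq> b1"
    unfolding b1_def t1_def using a n0 by (auto simp: transpose_def)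
  have b2: "b2 < n" "b2 \<noteq> 0" "b2 \<noteq> 1"
    unfolding b2_def t2_def using t1a2 b1 n0 by (auto simp: transpose_def)
  have r1: "reach k n p q1" unfolding q1_def using reach_psi[OF p n0(1) a(1)] .
  have q1_pos: "q1 \<in> pos k n" using reach_fixing_pos[OF r1 p] .
  have r2: "reach k n q1 q2" unfolding q2_def using reach_psi[OF q1_pos n0(2) b1(1)] .
  have q2_pos: "q2 \<in> pos k n" using reach_fixing_pos[OF r2 q1_pos] .
  have r3: "reach k n q2 q3" unfolding q3_def using reach_psi[OF q2_pos n0(3) b2(1)] .
  have "depth k (q1 l) = depth k (p (t1 l))" if "l < n" for l
    unfolding q1_def t1_def using depth_psi[OF p n0(1) a(1) that] .
  moreover have "depth k (q2 l) = depth k (q1 (t2 l))" if "l < n" for l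
    unfolding q2_def t2_def using depth_psi[OF q1_pos n0(2) b1(1) that] .
  moreover have "depth k (q3 l) = depth k (q2 (transpose 2 b2 l))" if "l < n" for l
    unfolding q3_def using depth_psi[OF q2_pos n0(3) b2(1) that] .
  moreover have "transpose 2 b2 0 = 0" "transpose 2 b2 1 = 1" "transpose 2 b2 2 = b2"
    using b2 by (auto simp: transpose_def)
  moreover have "t2 0 = 0" "t2 1 = b1" "t2 b2 = t1 a2"
    unfolding t2_def b2_def using b1 t1a2 by (auto simp: transpose_def)
  moreover have "t1 0 = a0" "t1 b1 = a1" "t1 (t1 a2) = a2" unfolding t1_def b1_def by auto
  ultimately have "depth k (q3 0) = depth k (p a0)" "depth k (q3 1) = depth k (p a1)"
    "depth k (q3 2) = depth k (p a2)"
    using n0 b1 b2 t1a2 by auto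
  moreover have "reach k n p q3" using r1 r2 r3 reach_fixing_trans by blast
  ultimately show ?thesis by blast
qed

lemma exists_rigid_triple:
  assumes k2: "2 \<le> k" and n3: "3 \<le> n" and p: "p \<in> pos k n"
    and i0: "i0 < n" "depth k (p i0) = 0" and i1: "i1 < n" "i1 \<noteq> i0" "\<not> central k (p i1)"
  shows "\<exists>a1 a2. a1 < n \<and> a2 < n \<and> distinct [i0, a1, a2] \<and> \<not> central k (p a1) \<and>
    (\<not> generic_on k p {i0, a1, a2} \<or> generic_on k p {..<n})"
proof -
  have i0_nc: "\<not> central k (p i0)"
    using not_central_of_depth_0[OF k2 _ i0(2)] p i0(1) unfolding pos_def by blast
  consider "generic_on k p {..<n}" | c where "c < n" "central k (p c)"
    | a b where "a < n" "b < n" "a \<noteq> b" "a \<noteq> i0" "depth k (p a) = depth k (p b)"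
      "\<forall>c<n. \<not> central k (p c)"
  proof (cases "generic_on k p {..<n} \<or> (\<exists>c<n. central k (p c))")
    case False
    then obtain a b where ab: "a < n" "b < n" "a \<noteq> b" "depth k (p a) = depth k (p b)"
      unfolding generic_on_def inj_on_def by auto
    then show ?thesis using that(3)[of a b] that(3)[of b a] False by (cases "a = i0") auto
  qed blast+
  then show ?thesis
  proof cases
    case 1
    obtain c where "c < n" "c \<noteq> i0" "c \<noteq> i1" using ex_index_neq2[OF n3] by blast
    then show ?thesis using 1 i1 by auto
  next
    case (2 c)
    then have "c \<noteq> i0" "c \<noteq> i1" using i0_nc i1 by auto
    then show ?thesis
      using 2 i1 unfolding generic_on_def by (intro exI[of _ i1] exI[of _ c]) auto
  next
    case (3 a b)
    have ng: "\<not> generic_on k p S" if "a \<in> S" "b \<in> S" for S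
      using 3 that unfolding generic_on_def inj_on_def by blast
    obtain c where c: "c < n" "c \<noteq> i0" "c \<noteq> a" using ex_index_neq2[OF n3] by blast
    show ?thesis
    proof (cases "b = i0")
      case True
      then show ?thesis using 3 c ng[of "{i0, a, c}"] by (intro exI[of _ a] exI[of _ c]) auto
    next
      case False
      then show ?thesis using 3 ng[of "{i0, a, b}"] by (intro exI[of _ a] exI[of _ b]) auto
    qed
  qed
qed

text \<open>The last clause makes the restriction to coordinates 0, 1, 2 rigid: either the
  mirror ambiguity of the layer is harmless, or the orientation invariant applies.\<close>

definition normal_form :: "nat \<Rightarrow> nat \<Rightarrow> (nat \<Rightarrow> nat) \<Rightarrow> bool" where
  "normal_form k n X \<longleftrightarrow> X \<in> pos k n \<and> depth k (X 0) = 0 \<and> \<not> central k (X 1) \<and>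
    (\<not> generic_on k X {0, 1, 2} \<or> generic_on k X {..<n})"

lemma exists_normal_form:
  assumes k2: "2 \<le> k" and n3: "3 \<le> n" and p: "p \<in> pos k n"
    and i0: "i0 < n" "depth k (p i0) = 0" and nf: "\<not> frame_shaped k n p"
  shows "\<exists>X. reach k n p X \<and> normal_form k n X"
proof -
  obtain i1 where i1: "i1 < n" "i1 \<noteq> i0" "\<not> central k (p i1)"
    using nf i0 unfolding frame_shaped_def by blast
  obtain a1 a2 where a: "a1 < n" "a2 < n" "distinct [i0, a1, a2]" "\<not> central k (p a1)"
      "\<not> generic_on k p {i0, a1, a2} \<or> generic_on k p {..<n}"
    using exists_rigid_triple[OF k2 n3 p i0 i1] by blast
  obtain X where X: "reach k n p X" "depth k (X 0) = depth k (p i0)"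
      "depth k (X 1) = depth k (p a1)" "depth k (X 2) = depth k (p a2)"
    using exists_reach_depths_to_front[OF p n3 i0(1) a(1-3)] by blast
  have X_pos: "X \<in> pos k n" using reach_fixing_pos[OF X(1) p] .
  have bounded: "\<forall>i\<in>S. p i < k" "\<forall>i\<in>S. X i < k" if "S \<subseteq> {..<n}" for S
    using X_pos p that unfolding pos_def by auto
  have "X 1 < k" "p a1 < k" using X_pos p a(1) n3 unfolding pos_def by auto
  then have "\<not> central k (X 1)" using X(3) a(4) central_depth_iff by metis
  moreover have "depths k X {0, 1, 2} = depths k p {i0, a1, a2}"
    using X(2-4) a(3) by (simp add: depths_insert depths_def)
  then have "generic_on k X {0, 1, 2} \<longleftrightarrow> generic_on k p {i0, a1, a2}"
    using generic_on_iff_depths[of "{0, 1, 2}" X k] generic_on_iff_depths[of "{i0, a1, a2}" p k]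
      bounded[of "{0, 1, 2}"] bounded[of "{i0, a1, a2}"] a i0(1) n3 by simp
  moreover have "generic_on k X {..<n} \<longleftrightarrow> generic_on k p {..<n}"
    using generic_on_depths_eq[of "{..<n}" X k p] depths_reach_fixing[OF X(1) p]
      bounded[of "{..<n}"] by simp
  ultimately show ?thesis using X X_pos a(5) i0(2) unfolding normal_form_def by auto
qed

lemma orbit_ne_frame_class:
  assumes u: "u \<in> pos k d" and ij: "i < d" "j < d" "i \<noteq> j"
    and nc: "\<not> central k (u i)" "\<not> central k (u j)"
  shows "{q. reach k d u q} \<noteq> frame_class k d"
proof -
  have "\<not> frame_shaped k d u" using ij nc unfolding frame_shaped_def by metis
  then have "u \<notin> frame_class k d" using frame_class_eq unfolding frame_class_def by auto
  moreover have "u \<in> {q. reach k d u q}" using reach_fixing_refl by simp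
  ultimately show ?thesis by blast
qed

lemma layer_class_of_normal_form:
  assumes k2: "2 \<le> k" and n3: "3 \<le> n" and X: "normal_form k n X"
  shows "conn_class k 3 {q. reach k 3 (restr {0, 1, 2} X) q}"
    and "{q. reach k 3 (restr {0, 1, 2} X) q} \<noteq> frame_class k 3"
proof -
  let ?u = "restr {0, 1, 2} X"
  have X_pos: "X \<in> pos k n" and X0: "depth k (X 0) = 0" and X1: "\<not> central k (X 1)"
    using X unfolding normal_form_def by auto
  have u: "?u \<in> pos k 3" using restr_in_pos[OF n3 X_pos] .
  have "X 0 < k" using X_pos n3 unfolding pos_def by auto
  then have "?u 0 = 0 \<or> ?u 0 = k - 1" "\<not> central k (?u 0)" "\<not> central k (?u 1)"
    using depth_eq_0_iff[of "X 0" k] not_central_of_depth_0[OF k2] X0 X1 unfolding restr_012 by auto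
  then have "external k 3 ?u" using u unfolding external_def by (intro conjI exI[of _ 0]) auto
  then show "conn_class k 3 {q. reach k 3 ?u q}"
    unfolding conn_class_def reach_iff by (intro exI[of _ ?u]) auto
  show "{q. reach k 3 ?u q} \<noteq> frame_class k 3"
    using orbit_ne_frame_class[OF u, of 0 1] \<open>\<not> central k (?u 0)\<close> \<open>\<not> central k (?u 1)\<close> by simp
qed

lemma exists_depth_0_in_orbit:
  assumes "external k d p0" "reach k d p0 p"
  shows "\<exists>i<d. depth k (p i) = 0"
proof -
  obtain e where e: "e < d" "p0 e = 0 \<or> p0 e = k - 1" and p0: "p0 \<in> pos k d"
    using assms(1) unfolding external_def by blast
  then have "depth k (p0 e) = 0" using depth_eq_0_iff unfolding pos_def by blast
  then have "0 \<in># depths k p0 {..<d}" using e(1) by (auto simp: mem_depths)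
  then have "0 \<in># depths k p {..<d}" using depths_reach_fixing[OF assms(2) p0] by simp
  then show ?thesis by (auto simp: mem_depths)
qed

lemma exists_normal_form_in_class:
  assumes k2: "2 \<le> k" and n3: "3 \<le> n"
    and A: "conn_class k n A" "A \<noteq> frame_class k n" and p: "p \<in> A"
  shows "\<exists>X. reach k n p X \<and> normal_form k n X"
proof -
  obtain p0 where p0: "external k n p0" "A = {q. reach k n p0 q}"
    using A(1) by (rule conn_class_reach)
  then have "reach k n p0 p" "p0 \<in> pos k n" using p unfolding external_def by auto
  then have "p \<in> pos k n" and "\<exists>i<n. depth k (p i) = 0"
    using reach_fixing_pos exists_depth_0_in_orbit[OF p0(1)] by auto
  moreover have "\<not> frame_shaped k n p" using not_frame_shaped_in_class[OF k2 _ A p] n3 by simp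
  ultimately show ?thesis using exists_normal_form[OF k2 n3] by blast
qed

lemma exists_comb_into_layer:
  assumes k2: "2 \<le> k" and n3: "3 \<le> n" and p0: "p0 \<in> pos k n"
    and X: "reach k n p0 X" "normal_form k n X" and q: "reach k n p0 q" "reach k n p0 q'"
  shows "\<exists>g\<in>comb k n. g X = X \<and> (\<forall>j. 3 \<le> j \<and> j < n \<longrightarrow> g q j = X j \<and> g q' j = X j)"
proof -
  have "X \<in> pos k n" "\<not> central k (X 0)" "\<not> central k (X 1)"
    using X(2) not_central_of_depth_0[OF k2] n3 unfolding normal_form_def pos_def by auto
  moreover have "r \<in> pos k n \<and> depths k r {..<n} = depths k X {..<n}" if "reach k n p0 r" for r
    using that X(1) p0 reach_fixing_pos depths_reach_fixing by metis
  ultimately show ?thesis using align_tails_of_two[OF n3] q by blast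
qed

theorem mainTheorem6:
  fixes k n :: nat and A :: "(nat \<Rightarrow> nat) set" and p1 p2 p3 :: "nat \<Rightarrow> nat"
  assumes "k \<ge> 2" and "n \<ge> 3"
    and "conn_class k n A" and "A \<noteq> frame_class k n"
    and "p1 \<in> A" and "p2 \<in> A" and "p3 \<in> A"
    and "p1 \<noteq> p2" and "p1 \<noteq> p3" and "p2 \<noteq> p3"
  shows "\<exists>g \<in> comb k n. \<exists>I c.
           I \<subseteq> {..<n} \<and> card I = 3 \<and> (\<forall>l<n. l \<notin> I \<longrightarrow> c l < k) \<and>
           (\<forall>q \<in> {p1, p2, p3}. \<forall>l<n. l \<notin> I \<longrightarrow> g q l = c l) \<and>
           (\<exists>B. conn_class k 3 B \<and> B \<noteq> frame_class k 3 \<and>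
                restr I (g p1) \<in> B \<and> restr I (g p2) \<in> B \<and> restr I (g p3) \<in> B)"
proof -
  obtain p0 where p0: "external k n p0" "A = {q. reach k n p0 q}"
    using assms(3) by (rule conn_class_reach)
  have p0_pos: "p0 \<in> pos k n" using p0(1) unfolding external_def by blast
  obtain X where X: "reach k n p1 X" "normal_form k n X"
    using exists_normal_form_in_class[OF assms(1-5)] by blast
  obtain g1 where g1: "g1 \<in> comb k n" "g1 p1 = X" using X(1) unfolding reach_iff by blast
  have g1_reach: "reach k n p0 (g1 q)" if "q \<in> {p1, p2, p3}" for q
    using that assms(5-7) p0(2) reach_fixing_trans reach_comb[OF g1(1)] by blast
  have in_orbit: "reach k n p0 X" "reach k n p0 (g1 p2)" "reach k n p0 (g1 p3)"
    using g1_reach g1(2) by auto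
  obtain g2 where g2: "g2 \<in> comb k n" "g2 X = X"
      "\<forall>j. 3 \<le> j \<and> j < n \<longrightarrow> g2 (g1 p2) j = X j \<and> g2 (g1 p3) j = X j"
    using exists_comb_into_layer[OF assms(1,2) p0_pos in_orbit(1) X(2) in_orbit(2,3)] by blast
  let ?g = "g2 \<circ> g1" and ?B = "{w. reach k 3 (restr {0, 1, 2} X) w}"
  have tail: "\<forall>l<n. l \<notin> {0, 1, 2} \<longrightarrow> ?g q l = X l" if "q \<in> {p1, p2, p3}" for q
    using that g1(2) g2(2,3) by auto
  have "restr {0, 1, 2} (?g q) \<in> ?B" if "q \<in> {p1, p2, p3}" for q
    using reach3_in_orbit[OF assms(2) p0_pos in_orbit(1)] tail[OF that] X(2)
      reach_fixing_trans[OF g1_reach[OF that] reach_comb[OF g2(1)]]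
    unfolding normal_form_def by auto
  moreover have "\<forall>l<n. l \<notin> {0, 1, 2} \<longrightarrow> X l < k" "{0, 1, 2} \<subseteq> {..<n}"
      "card {0, 1, 2 :: nat} = 3"
    using X(2) assms(2) unfolding normal_form_def pos_def by auto
  ultimately show ?thesis
    using comb_comp[OF g2(1) g1(1)] tail layer_class_of_normal_form[OF assms(1,2) X(2)]
    by (intro bexI[of _ ?g] exI[of _ "{0, 1, 2}"] exI[of _ X] conjI exI[of _ ?B]) auto
qed

end
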